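(* Let $n\ge3$, $\xi\in[0,1]$, and consider the star-to-complete network with adjacency matrix $\mathbf A^\xi$, $\theta_i=1$ for all $i$, and $F(p)=p$ on $[0,1]$. If the optimal value of problem (P4) (mixed-autonomy system) is strictly greater than the optimal value of (P4) with the additional constraint $z_i=0$ for all $i$ (human-only system), then $k=s/\omega\le1-\beta$.
   Context: Star-to-complete network: for $n\ge3$ and $\xi\in[0,1]$, $\mathbf A^\xi=[\alpha_{ij}]$ is the $n\times n$ matrix with $\alpha_{ii}=0$ for all $i$, $\alpha_{1j}=\frac1{n-1}$ for $j\ne1$, $\alpha_{i1}=c_1:=\frac{\xi}{n-1}+(1-\xi)$ for $i\ne1$, and $\alpha_{ij}=c_2:=\frac{\xi}{n-1}$ for $i,j\ne1$, $i\ne j$. Parameters: $\beta\in(0,1)$ (probability a driver remains in the platform each period), $\omega>0$ (drivers' lifetime outside-option earnings), $s\ge0$ (cost of operating an autonomous vehicle for a driver's expected lifetime), $k=s/\omega$. Problem (P4): maximize over $\{p_i,\delta_i,x_i,y_{ij},z_i,r_{ij}\}$ the objective $\sum_i p_i\theta_i(1-F(p_i))-\omega\sum_i\delta_i-s\sum_i z_i$ subject to, for all $i$: $d_i=\theta_i(1-F(p_i))$; $x_i=\beta\big[\sum_j\alpha_{ji}\min\{x_j,d_j\}+\sum_j y_{ji}\big]+\delta_i$; $\sum_j y_{ij}=\max\{x_i-d_i,0\}$; $z_i=\sum_j\alpha_{ji}\max\{d_j-x_j,0\}+\sum_j r_{ji}$; $\sum_j r_{ij}=z_i-\max\{d_i-x_i,0\}$;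 all variables nonnegative. *)

theory Defs
  imports Complex_Main
begin

text \<open>Nodes are indexed 0,...,n-1; node 0 is the hub of the star
  (node 1 in the paper).\<close>

definition star_complete :: "nat \<Rightarrow> real \<Rightarrow> nat \<Rightarrow> nat \<Rightarrow> real" where
  "star_complete n \<xi> i j =
     (if i = j then 0
      else if i = 0 then 1 / (real n - 1)
      else if j = 0 then \<xi> / (real n - 1) + (1 - \<xi>)
      else \<xi> / (real n - 1))"

definition F_unif :: "real \<Rightarrow> real" where
  "F_unif p = min 1 (max 0 p)"

definition P4_feasible ::
  "nat \<Rightarrow> (nat \<Rightarrow> nat \<Rightarrow> real) \<Rightarrow> (nat \<Rightarrow> real) \<Rightarrow> (real \<Rightarrow> real) \<Rightarrow> real \<Rightarrow>
   (nat \<Rightarrow> real) \<Rightarrow> (nat \<Rightarrow> real) \<Rightarrow> (nat \<Rightarrow> real) \<Rightarrow> (nat \<Rightarrow> nat \<Rightarrow> real) \<Rightarrow>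
   (nat \<Rightarrow> real) \<Rightarrow> (nat \<Rightarrow> nat \<Rightarrow> real) \<Rightarrow> bool" where
  "P4_feasible n \<alpha> \<theta> F \<beta> p \<delta> x y z r \<longleftrightarrow>
     (\<forall>i<n.
        (let d = (\<lambda>k. \<theta> k * (1 - F (p k))) in
          x i = \<beta> * ((\<Sum>j<n. \<alpha> j i * min (x j) (d j)) + (\<Sum>j<n. y j i)) + \<delta> i
        \<and> (\<Sum>j<n. y i j) = max (x i - d i) 0
        \<and> z i = (\<Sum>j<n. \<alpha> j i * max (d j - x j) 0) + (\<Sum>j<n. r j i)
        \<and> (\<Sum>j<n. r i j) = z i - max (d i - x i) 0
        \<and> d i \<ge> 0
        \<and> p i \<ge> 0 \<and> \<delta> i \<ge> 0 \<and> x i \<ge> 0 \<and> z i \<ge> 0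
        \<and> (\<forall>j<n. y i j \<ge> 0 \<and> r i j \<ge> 0)))"

definition P4_objective ::
  "nat \<Rightarrow> (nat \<Rightarrow> real) \<Rightarrow> (real \<Rightarrow> real) \<Rightarrow> real \<Rightarrow> real \<Rightarrow>
   (nat \<Rightarrow> real) \<Rightarrow> (nat \<Rightarrow> real) \<Rightarrow> (nat \<Rightarrow> real) \<Rightarrow> real" where
  "P4_objective n \<theta> F \<omega> s p \<delta> z =
     (\<Sum>i<n. p i * \<theta> i * (1 - F (p i))) - \<omega> * (\<Sum>i<n. \<delta> i) - s * (\<Sum>i<n. z i)"

definition P4_value ::
  "nat \<Rightarrow> (nat \<Rightarrow> nat \<Rightarrow> real) \<Rightarrow> (nat \<Rightarrow> real) \<Rightarrow> (real \<Rightarrow> real) \<Rightarrow> real \<Rightarrow> real \<Rightarrow> real \<Rightarrow>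
   bool \<Rightarrow> real" where
  "P4_value n \<alpha> \<theta> F \<beta> \<omega> s human_only =
     Sup {P4_objective n \<theta> F \<omega> s p \<delta> z | p \<delta> x y z r.
            P4_feasible n \<alpha> \<theta> F \<beta> p \<delta> x y z r \<and> (human_only \<longrightarrow> (\<forall>i<n. z i = 0))}"

end

theory Submission
  imports Defs
begin

text \<open>If operating an autonomous vehicle costs at least as much as the outside option
  of the human driver that could replace it, i.e. \<open>s \<ge> (1 - \<beta>) \<omega>\<close>, then every
  autonomous vehicle can be replaced by a human driver: serve the demand \<open>z\<^sub>i\<close> with
  additional drivers at node \<open>i\<close>, rebalance them along the routes \<open>r\<close> of the vehicles,
  and recruit the fraction \<open>1 - \<beta>\<close> of them that leaves the platform every period.
  This changes the cost by \<open>((1 - \<beta>) \<omega> - s) \<Sum> z\<^sub>i \<le> 0\<close>, so the human-only optimum is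
  at least the mixed one. The argument works on any network; for the star-to-complete
  network with uniform valuations it only remains to note that the problem is feasible
  and its objective is bounded.\<close>

lemma P4_feasible_demand_covered:
  assumes "P4_feasible n \<alpha> \<theta> F \<beta> p \<delta> x y z r" and "i < n"
  shows "\<theta> i * (1 - F (p i)) \<le> x i + z i"
proof -
  have "(\<Sum>j<n. r i j) = z i - max (\<theta> i * (1 - F (p i)) - x i) 0"
    and "\<forall>j<n. r i j \<ge> 0"
    using assms unfolding P4_feasible_def Let_def by blast+
  moreover from this(2) have "(\<Sum>j<n. r i j) \<ge> 0" by (intro sum_nonneg) auto
  ultimately show ?thesis by linarith
qed

lemma P4_feasible_replace_autonomous:
  assumes feas: "P4_feasible n \<alpha> \<theta> F \<beta> p \<delta> x y z r" and "\<beta> \<le> 1"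
  shows "P4_feasible n \<alpha> \<theta> F \<beta> p (\<lambda>i. \<delta> i + (1 - \<beta>) * z i) (\<lambda>i. x i + z i)
           (\<lambda>i j. y i j + r i j) (\<lambda>_. 0) (\<lambda>_ _. 0)"
  unfolding P4_feasible_def Let_def
proof (intro allI impI conjI)
  fix i assume i: "i < n"
  define d where "d = (\<lambda>k. \<theta> k * (1 - F (p k)))"
  have covered: "d j \<le> x j + z j" if "j < n" for j
    using P4_feasible_demand_covered[OF feas that] unfolding d_def .
  have covered_min: "min (x j + z j) (d j) = min (x j) (d j) + max (d j - x j) 0"
    if "j < n" for j
  proof -
    have "z j \<ge> 0" using feas that unfolding P4_feasible_def Let_def by blast
    with covered[OF that] show ?thesis by (simp add: min_def max_def)
  qed
  have x_eq: "x i = \<beta> * ((\<Sum>j<n. \<alpha> j i * min (x j) (d j)) + (\<Sum>j<n. y j i)) + \<delta> i"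
    and y_out: "(\<Sum>j<n. y i j) = max (x i - d i) 0"
    and z_eq: "z i = (\<Sum>j<n. \<alpha> j i * max (d j - x j) 0) + (\<Sum>j<n. r j i)"
    and r_out: "(\<Sum>j<n. r i j) = z i - max (d i - x i) 0"
    and nonneg: "d i \<ge> 0" "p i \<ge> 0" "\<delta> i \<ge> 0" "x i \<ge> 0" "z i \<ge> 0"
    and flows: "\<forall>j<n. y i j \<ge> 0 \<and> r i j \<ge> 0"
    using feas i unfolding P4_feasible_def Let_def d_def by blast+
  have served: "(\<Sum>j<n. \<alpha> j i * min (x j + z j) (d j))
      = (\<Sum>j<n. \<alpha> j i * min (x j) (d j)) + (\<Sum>j<n. \<alpha> j i * max (d j - x j) 0)"
    unfolding sum.distrib[symmetric]
    by (rule sum.cong) (simp_all add: covered_min distrib_left)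
  show "x i + z i = \<beta> * ((\<Sum>j<n. \<alpha> j i * min (x j + z j) (\<theta> j * (1 - F (p j))))
          + (\<Sum>j<n. y j i + r j i)) + (\<delta> i + (1 - \<beta>) * z i)"
    using x_eq z_eq unfolding served[unfolded d_def] sum.distrib d_def
    by (simp add: algebra_simps)
  show "(\<Sum>j<n. y i j + r i j) = max (x i + z i - \<theta> i * (1 - F (p i))) 0"
    using y_out r_out covered[OF i] unfolding sum.distrib d_def by (simp add: max_def)
  show "0 = (\<Sum>j<n. \<alpha> j i * max (\<theta> j * (1 - F (p j)) - (x j + z j)) 0) + (\<Sum>j<n. 0)"
    using covered unfolding d_def by (simp add: max_def)
  show "(\<Sum>j<n. 0) = 0 - max (\<theta> i * (1 - F (p i)) - (x i + z i)) 0"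
    using covered[OF i] unfolding d_def by (simp add: max_def)
  show "\<theta> i * (1 - F (p i)) \<ge> 0" "p i \<ge> 0" "\<delta> i + (1 - \<beta>) * z i \<ge> 0" "x i + z i \<ge> 0"
    using nonneg \<open>\<beta> \<le> 1\<close> unfolding d_def by simp_all
  show "(0::real) \<le> 0" by simp
  fix j assume "j < n"
  then show "y i j + r i j \<ge> 0" "(0::real) \<le> 0" using flows by auto
qed

lemma P4_objective_replace_autonomous:
  assumes "\<forall>i<n. z i \<ge> 0" and "(1 - \<beta>) * \<omega> \<le> s"
  shows "P4_objective n \<theta> F \<omega> s p \<delta> z
           \<le> P4_objective n \<theta> F \<omega> s p (\<lambda>i. \<delta> i + (1 - \<beta>) * z i) (\<lambda>_. 0)"
proof -
  have "(1 - \<beta>) * \<omega> * (\<Sum>i<n. z i) \<le> s * (\<Sum>i<n. z i)"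
    using assms by (intro mult_right_mono sum_nonneg) auto
  then show ?thesis
    unfolding P4_objective_def sum.distrib sum_distrib_left[symmetric]
    by (simp add: algebra_simps)
qed

lemma P4_objective_le_revenue_bound:
  assumes "P4_feasible n \<alpha> \<theta> F \<beta> p \<delta> x y z r" and "\<omega> \<ge> 0" and "s \<ge> 0"
    and revenue: "\<And>i q. i < n \<Longrightarrow> 0 \<le> q \<Longrightarrow> q * \<theta> i * (1 - F q) \<le> c"
  shows "P4_objective n \<theta> F \<omega> s p \<delta> z \<le> real n * c"
proof -
  have nonneg: "\<forall>i<n. p i \<ge> 0 \<and> \<delta> i \<ge> 0 \<and> z i \<ge> 0"
    using assms(1) unfolding P4_feasible_def Let_def by blast
  then have "\<omega> * (\<Sum>i<n. \<delta> i) \<ge> 0" and "s * (\<Sum>i<n. z i) \<ge> 0"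
    using assms(2,3) by (auto intro!: mult_nonneg_nonneg sum_nonneg)
  moreover have "(\<Sum>i<n. p i * \<theta> i * (1 - F (p i))) \<le> (\<Sum>i<n. c)"
    using nonneg revenue by (intro sum_mono) auto
  ultimately show ?thesis unfolding P4_objective_def by simp
qed

lemma P4_value_mixed_le_human:
  assumes nonempty: "\<exists>p \<delta> x y z r. P4_feasible n \<alpha> \<theta> F \<beta> p \<delta> x y z r"
    and revenue: "\<And>i q. i < n \<Longrightarrow> 0 \<le> q \<Longrightarrow> q * \<theta> i * (1 - F q) \<le> c"
    and "\<beta> \<le> 1" and "\<omega> \<ge> 0" and "s \<ge> 0" and "(1 - \<beta>) * \<omega> \<le> s"
  shows "P4_value n \<alpha> \<theta> F \<beta> \<omega> s False \<le> P4_value n \<alpha> \<theta> F \<beta> \<omega> s True"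
proof -
  let ?values = "\<lambda>human_only. {P4_objective n \<theta> F \<omega> s p \<delta> z | p \<delta> x y z r.
    P4_feasible n \<alpha> \<theta> F \<beta> p \<delta> x y z r \<and> (human_only \<longrightarrow> (\<forall>i<n. z i = 0))}"
  have "Sup (?values False) \<le> Sup (?values True)"
  proof (rule cSup_mono)
    show "?values False \<noteq> {}"
      using nonempty by simp
    show "bdd_above (?values True)"
    proof (rule bdd_aboveI)
      fix a assume "a \<in> ?values True"
      then obtain p \<delta> x y z r where a: "a = P4_objective n \<theta> F \<omega> s p \<delta> z"
        and feas: "P4_feasible n \<alpha> \<theta> F \<beta> p \<delta> x y z r"
        by blast
      show "a \<le> real n * c"
        unfolding a by (rule P4_objective_le_revenue_bound[OF feas \<open>\<omega> \<ge> 0\<close> \<open>s \<ge> 0\<close> revenue])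
    qed
  next
    fix b assume "b \<in> ?values False"
    then obtain p \<delta> x y z r where b: "b = P4_objective n \<theta> F \<omega> s p \<delta> z"
      and feas: "P4_feasible n \<alpha> \<theta> F \<beta> p \<delta> x y z r"
      by blast
    let ?\<delta>' = "\<lambda>i. \<delta> i + (1 - \<beta>) * z i"
    have "\<forall>i<n. z i \<ge> 0"
      using feas unfolding P4_feasible_def Let_def by blast
    then have "b \<le> P4_objective n \<theta> F \<omega> s p ?\<delta>' (\<lambda>_. 0)"
      unfolding b by (rule P4_objective_replace_autonomous[OF _ \<open>(1 - \<beta>) * \<omega> \<le> s\<close>])
    moreover have "P4_objective n \<theta> F \<omega> s p ?\<delta>' (\<lambda>_. 0) \<in> ?values True"
      using P4_feasible_replace_autonomous[OF feas \<open>\<beta> \<le> 1\<close>] by blast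
    ultimately show "\<exists>a \<in> ?values True. b \<le> a"
      by blast
  qed
  then show ?thesis
    unfolding P4_value_def .
qed

lemma F_unif_revenue_le: "q * (1 - F_unif q) \<le> 1 / 4"
proof (cases "0 \<le> q \<and> q \<le> 1")
  case True
  have "0 \<le> (q - 1 / 2)\<^sup>2" by simp
  with True show ?thesis by (simp add: F_unif_def power2_eq_square algebra_simps)
qed (auto simp: F_unif_def)

lemma P4_feasible_idle:
  "P4_feasible n \<alpha> (\<lambda>_. 1) F_unif \<beta> (\<lambda>_. 1) (\<lambda>_. 0) (\<lambda>_. 0) (\<lambda>_ _. 0) (\<lambda>_. 0) (\<lambda>_ _. 0)"
  unfolding P4_feasible_def Let_def by (simp add: F_unif_def)

theorem proposition1:
  fixes n :: nat and \<xi> \<beta> \<omega> s :: real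
  assumes "n \<ge> 3" and "0 \<le> \<xi>" and "\<xi> \<le> 1"
    and "0 < \<beta>" and "\<beta> < 1" and "\<omega> > 0" and "s \<ge> 0"
    and "P4_value n (star_complete n \<xi>) (\<lambda>_. 1) F_unif \<beta> \<omega> s False
         > P4_value n (star_complete n \<xi>) (\<lambda>_. 1) F_unif \<beta> \<omega> s True"
  shows "s / \<omega> \<le> 1 - \<beta>"
proof (rule ccontr)
  assume "\<not> s / \<omega> \<le> 1 - \<beta>"
  with \<open>\<omega> > 0\<close> have "(1 - \<beta>) * \<omega> \<le> s" by (simp add: field_simps)
  moreover have "\<exists>p \<delta> x y z r. P4_feasible n (star_complete n \<xi>) (\<lambda>_. 1) F_unif \<beta> p \<delta> x y z r"
    using P4_feasible_idle by blast
  moreover have "q * 1 * (1 - F_unif q) \<le> 1 / 4" for q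
    using F_unif_revenue_le by simp
  ultimately have "P4_value n (star_complete n \<xi>) (\<lambda>_. 1) F_unif \<beta> \<omega> s False
           \<le> P4_value n (star_complete n \<xi>) (\<lambda>_. 1) F_unif \<beta> \<omega> s True"
    using \<open>\<beta> < 1\<close> \<open>\<omega> > 0\<close> \<open>s \<ge> 0\<close> by (intro P4_value_mixed_le_human[where c = "1 / 4"]) auto
  with assms(8) show False by simp
qed

end
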